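(* Let $(E,X,Y)$, with $X=(X_1,\dots,X_d)$, be generated by a structural causal model whose graph is a DAG, whose distribution is faithful (and Markov) with respect to it, and in which $E$ is exogenous. Let $m<d$, define $S^m_{\mathrm{IAS}}:=\bigcup_{S\in\mathcal{MI},\,|S|\le m}S$, and let $m_{\min}$ and $m_{\max}$ be the size of a smallest and of a largest minimally invariant set, respectively. Then: (i) $S^m_{\mathrm{IAS}}\subseteq\mathrm{AN}_Y$; (ii) if $m\ge m_{\max}$, then $S^m_{\mathrm{IAS}}=S_{\mathrm{IAS}}$; (iii) if $m\ge m_{\min}$ and $E\notin\mathrm{PA}_Y$, then $S^m_{\mathrm{IAS}}\in\mathcal{I}$; (iv) if $m\ge m_{\min}$ and $E\notin\mathrm{PA}_Y$, then $S_{\mathrm{ICP}}\subseteq S^m_{\mathrm{IAS}}$, with equality if and only if $S_{\mathrm{ICP}}\in\mathcal{I}$.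
   Context: $\mathrm{PA}_Y$ and $\mathrm{AN}_Y$ are the parents and ancestors of $Y$ in the DAG (indices $j\in[d]$ identified with $X_j$). $S\subseteq[d]$ is invariant if $Y\perp\!\!\!\perp E\mid X_S$; $\mathcal{I}$ is the collection of invariant sets; $S$ is minimally invariant if $S\in\mathcal{I}$ and no proper subset of $S$ is in $\mathcal{I}$; $\mathcal{MI}$ is the collection of minimally invariant sets. $S_{\mathrm{IAS}}=\bigcup_{S\in\mathcal{MI}}S$ and $S_{\mathrm{ICP}}=\bigcap_{S\in\mathcal{I}}S$ (with $S_{\mathrm{ICP}}=\emptyset$ if $\mathcal{I}=\emptyset$; unions over empty collections are $\emptyset$). *)

theory Defs
  imports Main
begin

datatype node = Env | Resp | Cov nat

definition nodes :: "nat \<Rightarrow> node set" where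
  "nodes d = {Env, Resp} \<union> Cov ` {1..d}"

text \<open>A graph is an edge relation; G a b means a directed edge a -> b.\<close>
definition is_dag :: "nat \<Rightarrow> (node \<Rightarrow> node \<Rightarrow> bool) \<Rightarrow> bool" where
  "is_dag d G \<longleftrightarrow> (\<forall>a b. G a b \<longrightarrow> a \<in> nodes d \<and> b \<in> nodes d) \<and> (\<forall>v. \<not> G\<^sup>+\<^sup>+ v v)"

definition adj :: "(node \<Rightarrow> node \<Rightarrow> bool) \<Rightarrow> node \<Rightarrow> node \<Rightarrow> bool" where
  "adj G a b \<longleftrightarrow> G a b \<or> G b a"

definition is_path :: "nat \<Rightarrow> (node \<Rightarrow> node \<Rightarrow> bool) \<Rightarrow> node list \<Rightarrow> bool" where
  "is_path d G p \<longleftrightarrow> p \<noteq> [] \<and> distinct p \<and> set p \<subseteq> nodes d \<and>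
     (\<forall>i. Suc i < length p \<longrightarrow> adj G (p ! i) (p ! Suc i))"

definition collider :: "(node \<Rightarrow> node \<Rightarrow> bool) \<Rightarrow> node list \<Rightarrow> nat \<Rightarrow> bool" where
  "collider G p i \<longleftrightarrow> G (p ! (i - 1)) (p ! i) \<and> G (p ! Suc i) (p ! i)"

definition d_connecting :: "(node \<Rightarrow> node \<Rightarrow> bool) \<Rightarrow> node list \<Rightarrow> node set \<Rightarrow> bool" where
  "d_connecting G p Z \<longleftrightarrow> (\<forall>i. 0 < i \<and> Suc i < length p \<longrightarrow>
     (if collider G p i then (\<exists>w. G\<^sup>*\<^sup>* (p ! i) w \<and> w \<in> Z) else p ! i \<notin> Z))"

definition d_separated :: "nat \<Rightarrow> (node \<Rightarrow> node \<Rightarrow> bool) \<Rightarrow> node set \<Rightarrow> node set \<Rightarrow> node set \<Rightarrow> bool" where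
  "d_separated d G A B Z \<longleftrightarrow>
     (\<forall>p. is_path d G p \<and> hd p \<in> A \<and> last p \<in> B \<longrightarrow> \<not> d_connecting G p Z)"

text \<open>Markov and faithful: for disjoint sets of nodes, conditional independence
(of the joint distribution of (E,X,Y)) holds iff d-separation holds.\<close>
definition markov_faithful ::
  "nat \<Rightarrow> (node \<Rightarrow> node \<Rightarrow> bool) \<Rightarrow> (node set \<Rightarrow> node set \<Rightarrow> node set \<Rightarrow> bool) \<Rightarrow> bool" where
  "markov_faithful d G indep \<longleftrightarrow>
     (\<forall>A B Z. A \<subseteq> nodes d \<and> B \<subseteq> nodes d \<and> Z \<subseteq> nodes d \<and>
        A \<inter> B = {} \<and> A \<inter> Z = {} \<and> B \<inter> Z = {} \<longrightarrow>
        (indep A B Z \<longleftrightarrow> d_separated d G A B Z))"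

definition exogenous :: "(node \<Rightarrow> node \<Rightarrow> bool) \<Rightarrow> node \<Rightarrow> bool" where
  "exogenous G v \<longleftrightarrow> (\<forall>u. \<not> G u v)"

definition parents :: "(node \<Rightarrow> node \<Rightarrow> bool) \<Rightarrow> node \<Rightarrow> node set" where
  "parents G v = {u. G u v}"

definition AN_Y :: "nat \<Rightarrow> (node \<Rightarrow> node \<Rightarrow> bool) \<Rightarrow> nat set" where
  "AN_Y d G = {j \<in> {1..d}. G\<^sup>+\<^sup>+ (Cov j) Resp}"

definition invariant :: "nat \<Rightarrow> (node set \<Rightarrow> node set \<Rightarrow> node set \<Rightarrow> bool) \<Rightarrow> nat set \<Rightarrow> bool" where
  "invariant d indep S \<longleftrightarrow> S \<subseteq> {1..d} \<and> indep {Resp} {Env} (Cov ` S)"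

definition Inv :: "nat \<Rightarrow> (node set \<Rightarrow> node set \<Rightarrow> node set \<Rightarrow> bool) \<Rightarrow> nat set set" where
  "Inv d indep = {S. invariant d indep S}"

definition MI :: "nat \<Rightarrow> (node set \<Rightarrow> node set \<Rightarrow> node set \<Rightarrow> bool) \<Rightarrow> nat set set" where
  "MI d indep = {S \<in> Inv d indep. \<forall>T. T \<subset> S \<longrightarrow> T \<notin> Inv d indep}"

definition S_IAS :: "nat \<Rightarrow> (node set \<Rightarrow> node set \<Rightarrow> node set \<Rightarrow> bool) \<Rightarrow> nat set" where
  "S_IAS d indep = \<Union> (MI d indep)"

definition S_IAS_m :: "nat \<Rightarrow> (node set \<Rightarrow> node set \<Rightarrow> node set \<Rightarrow> bool) \<Rightarrow> nat \<Rightarrow> nat set" where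
  "S_IAS_m d indep m = \<Union> {S \<in> MI d indep. card S \<le> m}"

definition S_ICP :: "nat \<Rightarrow> (node set \<Rightarrow> node set \<Rightarrow> node set \<Rightarrow> bool) \<Rightarrow> nat set" where
  "S_ICP d indep = (if Inv d indep = {} then {} else \<Inter> (Inv d indep))"

definition m_min :: "nat \<Rightarrow> (node set \<Rightarrow> node set \<Rightarrow> node set \<Rightarrow> bool) \<Rightarrow> nat" where
  "m_min d indep = Min (card ` MI d indep)"

definition m_max :: "nat \<Rightarrow> (node set \<Rightarrow> node set \<Rightarrow> node set \<Rightarrow> bool) \<Rightarrow> nat" where
  "m_max d indep = Max (card ` MI d indep)"

end

theory Submission
  imports Defs
begin

text \<open>By faithfulness, S is invariant iff X_S d-separates Y from E, so everything reduces to
  three graphical facts.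
  (a) Intersecting a separating set with AN_Y keeps it separating, because a non-collider on a
  d-connecting path is an ancestor of an endpoint or of the conditioning set. Hence minimally
  invariant sets consist of ancestors of Y.
  (b) If E is not a parent of Y, then PA_Y separates, so minimally invariant sets exist.
  (c) Enlarging a separating set S by ancestors of Y keeps it separating: on a path that is
  d-connecting given the larger set, the last node blocked given S is a collider with a
  descendant that is an ancestor of Y; going from Y up to that collider and then along the rest
  of the path gives a path that is d-connecting given S.
  The rest is bookkeeping with finite families of sets.\<close>

abbreviation separates_YE :: "nat \<Rightarrow> (node \<Rightarrow> node \<Rightarrow> bool) \<Rightarrow> nat set \<Rightarrow> bool" where
  "separates_YE d G S \<equiv> d_separated d G {Resp} {Env} (Cov ` S)"

lemma is_dag_asym:
  assumes "is_dag d G" "G u v" shows "\<not> G v u"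
proof
  assume "G v u"
  then have "G\<^sup>+\<^sup>+ u u" using assms(2) by (meson tranclp.r_into_trancl tranclp.trancl_into_trancl)
  then show False using assms(1) by (simp add: is_dag_def)
qed

lemma exogenous_rtranclp_eq: "exogenous G v \<Longrightarrow> G\<^sup>*\<^sup>* u v \<Longrightarrow> u = v"
  unfolding exogenous_def by (metis rtranclp.cases)

definition unblocked_at :: "(node \<Rightarrow> node \<Rightarrow> bool) \<Rightarrow> node list \<Rightarrow> node set \<Rightarrow> nat \<Rightarrow> bool" where
  "unblocked_at G p Z i \<longleftrightarrow>
     (if collider G p i then \<exists>w. G\<^sup>*\<^sup>* (p ! i) w \<and> w \<in> Z else p ! i \<notin> Z)"

lemma d_connecting_iff_unblocked_at:
  "d_connecting G p Z \<longleftrightarrow> (\<forall>i. 0 < i \<and> Suc i < length p \<longrightarrow> unblocked_at G p Z i)"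
  by (simp add: d_connecting_def unblocked_at_def)

lemma d_connecting_forward_reach:
  assumes dc: "d_connecting G p Z"
    and adj: "\<forall>i. Suc i < length p \<longrightarrow> adj G (p ! i) (p ! Suc i)"
  shows "Suc i < length p \<Longrightarrow> G (p ! i) (p ! Suc i) \<Longrightarrow>
    G\<^sup>*\<^sup>* (p ! i) (last p) \<or> (\<exists>w\<in>Z. G\<^sup>*\<^sup>* (p ! i) w)"
proof (induction "length p - i" arbitrary: i rule: less_induct)
  case less
  show ?case
  proof (cases "Suc (Suc i) < length p")
    case False
    then have "p ! Suc i = last p"
      using less.prems(1) by (metis Suc_lessI diff_Suc_1 last_conv_nth list.size(3) not_less_zero)
    then show ?thesis using less.prems(2) by auto
  next
    case inner: True
    have open_i: "unblocked_at G p Z (Suc i)"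
      using dc inner by (simp add: d_connecting_iff_unblocked_at)
    have "G\<^sup>*\<^sup>* (p ! Suc i) (last p) \<or> (\<exists>w\<in>Z. G\<^sup>*\<^sup>* (p ! Suc i) w)"
    proof (cases "collider G p (Suc i)")
      case True
      then show ?thesis using open_i by (auto simp: unblocked_at_def)
    next
      case False
      then have "G (p ! Suc i) (p ! Suc (Suc i))"
        using less.prems(2) adj inner by (auto simp: collider_def adj_def)
      then show ?thesis using less.hyps[of "Suc i"] inner by auto
    qed
    then show ?thesis
      using less.prems(2) by (meson converse_rtranclp_into_rtranclp)
  qed
qed

lemma d_connecting_backward_reach:
  assumes dc: "d_connecting G p Z"
    and adj: "\<forall>i. Suc i < length p \<longrightarrow> adj G (p ! i) (p ! Suc i)"
  shows "0 < i \<Longrightarrow> i < length p \<Longrightarrow> G (p ! i) (p ! (i - 1)) \<Longrightarrow>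
    G\<^sup>*\<^sup>* (p ! i) (hd p) \<or> (\<exists>w\<in>Z. G\<^sup>*\<^sup>* (p ! i) w)"
proof (induction i rule: less_induct)
  case (less i)
  show ?case
  proof (cases "i = 1")
    case True
    then have "p ! (i - 1) = hd p"
      using less.prems(2) by (cases p) auto
    then show ?thesis using less.prems(3) by auto
  next
    case False
    then obtain j where i: "i = Suc (Suc j)"
      using less.prems(1) by (metis One_nat_def gr0_implies_Suc not0_implies_Suc)
    have open_j: "unblocked_at G p Z (Suc j)"
      using dc less.prems i by (simp add: d_connecting_iff_unblocked_at)
    have "G\<^sup>*\<^sup>* (p ! Suc j) (hd p) \<or> (\<exists>w\<in>Z. G\<^sup>*\<^sup>* (p ! Suc j) w)"
    proof (cases "collider G p (Suc j)")
      case True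
      then show ?thesis using open_j by (auto simp: unblocked_at_def)
    next
      case False
      then have "G (p ! Suc j) (p ! j)"
        using less.prems adj[rule_format, of j] i by (auto simp: collider_def adj_def)
      then show ?thesis using less.IH[of "Suc j"] less.prems i by auto
    qed
    then show ?thesis
      using less.prems(3) i by (metis converse_rtranclp_into_rtranclp diff_Suc_1)
  qed
qed

lemma d_connecting_noncollider_reach:
  assumes path: "is_path d G p" and dc: "d_connecting G p Z"
    and i: "0 < i" "Suc i < length p" and noncollider: "\<not> collider G p i"
  shows "G\<^sup>*\<^sup>* (p ! i) (hd p) \<or> G\<^sup>*\<^sup>* (p ! i) (last p) \<or> (\<exists>w\<in>Z. G\<^sup>*\<^sup>* (p ! i) w)"
proof -
  have adj: "\<forall>i. Suc i < length p \<longrightarrow> adj G (p ! i) (p ! Suc i)"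
    using path by (simp add: is_path_def)
  moreover have "adj G (p ! (i - 1)) (p ! i)"
    using adj i by (metis Suc_diff_1 Suc_lessD)
  ultimately have "G (p ! i) (p ! (i - 1)) \<or> G (p ! i) (p ! Suc i)"
    using noncollider i by (auto simp: collider_def adj_def)
  then show ?thesis
    using d_connecting_backward_reach[OF dc adj, of i] d_connecting_forward_reach[OF dc adj, of i] i
    by auto
qed

lemma d_connecting_drop:
  assumes "\<forall>i. j < i \<and> Suc i < length p \<longrightarrow> unblocked_at G p Z i"
  shows "d_connecting G (drop j p) Z"
  unfolding d_connecting_iff_unblocked_at
proof (intro allI impI)
  fix i assume i: "0 < i \<and> Suc i < length (drop j p)"
  then obtain k where k: "i = Suc k" by (metis gr0_implies_Suc)
  have "j \<le> length p" "Suc (j + i) < length p" using i by auto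
  then have "collider G (drop j p) i = collider G p (j + i)" "drop j p ! i = p ! (j + i)"
    unfolding collider_def using k by simp_all
  then show "unblocked_at G (drop j p) Z i"
    using assms \<open>Suc (j + i) < length p\<close> i by (simp add: unblocked_at_def)
qed

lemma d_connecting_drop_after_last_blocked:
  assumes "\<not> d_connecting G p Z"
  obtains j where "0 < j" "Suc j < length p" "\<not> unblocked_at G p Z j"
    "d_connecting G (drop j p) Z"
proof -
  define F where "F = {i. 0 < i \<and> Suc i < length p \<and> \<not> unblocked_at G p Z i}"
  have "finite F" unfolding F_def by (rule finite_subset[of _ "{..<length p}"]) auto
  moreover have "F \<noteq> {}" using assms unfolding F_def d_connecting_iff_unblocked_at by blast
  ultimately have j: "Max F \<in> F" and max: "\<And>i. i \<in> F \<Longrightarrow> i \<le> Max F" by simp_all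
  have "unblocked_at G p Z i" if "Max F < i \<and> Suc i < length p" for i
  proof -
    have "i \<notin> F" using max that by (meson leD)
    then show ?thesis using that by (simp add: F_def)
  qed
  then have "d_connecting G (drop (Max F) p) Z" by (blast intro: d_connecting_drop)
  then show thesis using j by (intro that) (simp_all add: F_def)
qed

lemma is_path_drop:
  assumes "is_path d G p" "j < length p" shows "is_path d G (drop j p)"
  using assms unfolding is_path_def by (auto dest: in_set_dropD)

lemma is_path_Cons:
  assumes "is_path d G q" "x \<notin> set q" "x \<in> nodes d" "adj G x (hd q)"
  shows "is_path d G (x # q)"
  using assms unfolding is_path_def
  by (auto simp: hd_conv_nth nth_Cons split: nat.split)

lemma d_connecting_Cons:
  assumes "d_connecting G q Z" "q \<noteq> []" "\<not> G x (hd q)" "hd q \<notin> Z"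
  shows "d_connecting G (x # q) Z"
  unfolding d_connecting_iff_unblocked_at
proof (intro allI impI)
  fix i assume i: "0 < i \<and> Suc i < length (x # q)"
  show "unblocked_at G (x # q) Z i"
  proof (cases "i = 1")
    case True
    then show ?thesis using assms(2-4) by (auto simp: unblocked_at_def collider_def hd_conv_nth)
  next
    case False
    then obtain k where k: "i = Suc (Suc k)"
      using i by (metis One_nat_def gr0_implies_Suc not0_implies_Suc)
    have "collider G (x # q) i = collider G q (Suc k)" unfolding collider_def k by simp
    then show ?thesis
      using assms(1) i k by (auto simp: d_connecting_iff_unblocked_at unblocked_at_def)
  qed
qed

text \<open>Walk from v back up the directed path to u and continue along q: every node added
  has an outgoing edge on the new path, so it is a non-collider, and it lies outside Z.\<close>
lemma d_connecting_path_from_descendant: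
  assumes dag: "is_dag d G" and desc: "G\<^sup>*\<^sup>* u v"
    and avoid_Z: "\<And>w. G\<^sup>*\<^sup>* u w \<Longrightarrow> w \<notin> Z"
    and q: "is_path d G q" "hd q = u" "d_connecting G q Z"
  shows "\<exists>q'. is_path d G q' \<and> hd q' = v \<and> last q' = last q \<and> d_connecting G q' Z"
  using desc avoid_Z q
proof (induction arbitrary: q rule: converse_rtranclp_induct)
  case base
  then show ?case by blast
next
  case (step u z)
  have avoid_Z_z: "w \<notin> Z" if "G\<^sup>*\<^sup>* z w" for w
    using step.prems(1) step.hyps(1) that by (meson converse_rtranclp_into_rtranclp)
  have "q \<noteq> []" using step.prems(2) by (simp add: is_path_def)
  obtain q1 where q1: "is_path d G q1" "hd q1 = z" "last q1 = last q" "d_connecting G q1 Z"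
  proof (cases "z \<in> set q")
    case True
    then obtain r where r: "r < length q" "q ! r = z" by (meson in_set_conv_nth)
    show thesis
    proof
      show "is_path d G (drop r q)" using is_path_drop[OF step.prems(2) r(1)] .
      show "hd (drop r q) = z" using r by (simp add: hd_drop_conv_nth)
      show "last (drop r q) = last q" using r by simp
      show "d_connecting G (drop r q) Z"
        using step.prems(4) by (intro d_connecting_drop) (simp add: d_connecting_iff_unblocked_at)
    qed
  next
    case False
    show thesis
    proof
      have "z \<in> nodes d" using dag step.hyps(1) by (simp add: is_dag_def)
      then show "is_path d G (z # q)"
        using is_path_Cons[OF step.prems(2) False] step.hyps(1) step.prems(3)
        by (simp add: adj_def)
      show "hd (z # q) = z" by simp
      show "last (z # q) = last q" using \<open>q \<noteq> []\<close> by simp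
      show "d_connecting G (z # q) Z"
        using d_connecting_Cons[OF step.prems(4) \<open>q \<noteq> []\<close>] step.prems(1,3)
          is_dag_asym[OF dag step.hyps(1)] by simp
    qed
  qed
  then show ?case using step.IH[OF avoid_Z_z q1(1,2,4)] q1(3) by simp
qed

lemma invariant_iff_separates:
  assumes "markov_faithful d G indep"
  shows "S \<in> Inv d indep \<longleftrightarrow> S \<subseteq> {1..d} \<and> separates_YE d G S"
proof (cases "S \<subseteq> {1..d}")
  case True
  then have "Cov ` S \<subseteq> nodes d" "{Resp} \<subseteq> nodes d" "{Env} \<subseteq> nodes d"
    by (auto simp: nodes_def)
  then have "indep {Resp} {Env} (Cov ` S) \<longleftrightarrow> separates_YE d G S"
    using assms[unfolded markov_faithful_def, rule_format, of "{Resp}" "{Env}" "Cov ` S"] by auto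
  then show ?thesis using True by (simp add: Inv_def invariant_def)
qed (simp add: Inv_def invariant_def)

lemma parents_separate:
  assumes dag: "is_dag d G" and exo: "exogenous G Env" and "Env \<notin> parents G Resp"
  shows "separates_YE d G {j \<in> {1..d}. G (Cov j) Resp}"
  unfolding d_separated_def
proof (intro allI impI notI)
  define Z where "Z = Cov ` {j \<in> {1..d}. G (Cov j) Resp}"
  fix p assume p: "is_path d G p \<and> hd p \<in> {Resp} \<and> last p \<in> {Env}"
    and "d_connecting G p (Cov ` {j \<in> {1..d}. G (Cov j) Resp})"
  then have dc: "d_connecting G p Z" by (simp add: Z_def)
  have no_edge: "\<not> G Env Resp" using assms(3) by (simp add: parents_def)
  have "Suc 0 < length p"
  proof (rule ccontr)
    assume "\<not> Suc 0 < length p"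
    then have "hd p = last p" using p by (cases p) (auto simp: is_path_def)
    then show False using p by auto
  qed
  have p0: "p ! 0 = Resp" using p \<open>Suc 0 < length p\<close> by (cases p) auto
  show False
  proof (cases "G (p ! 1) Resp")
    case True
    then have "p ! 1 \<noteq> last p" using p no_edge by auto
    then have inner: "Suc 1 < length p"
      using \<open>Suc 0 < length p\<close>
      by (metis One_nat_def Suc_lessI diff_Suc_1 last_conv_nth list.size(3) not_less_zero)
    have "p ! 1 \<in> nodes d" "p ! 1 \<noteq> Resp"
      using p inner p0 nth_eq_iff_index_eq[of p 0 1] by (auto simp: is_path_def)
    then have "p ! 1 \<in> Z" using True no_edge by (auto simp: Z_def nodes_def)
    moreover have "\<not> collider G p 1"
      using is_dag_asym[OF dag True] p0 by (simp add: collider_def)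
    ultimately show False
      using dc inner by (auto simp: d_connecting_iff_unblocked_at unblocked_at_def)
  next
    case False
    then have "G Resp (p ! 1)"
      using p \<open>Suc 0 < length p\<close> p0 by (auto simp: is_path_def adj_def)
    then have "G\<^sup>*\<^sup>* Resp Env \<or> (\<exists>w\<in>Z. G\<^sup>*\<^sup>* Resp w)"
      using d_connecting_forward_reach[OF dc, of 0] p \<open>Suc 0 < length p\<close> p0
      by (auto simp: is_path_def)
    moreover have "\<not> G\<^sup>*\<^sup>* Resp Env" using exogenous_rtranclp_eq[OF exo] by blast
    moreover have "\<not> G\<^sup>*\<^sup>* Resp (Cov j)" if "G (Cov j) Resp" for j
      using dag that unfolding is_dag_def by (meson rtranclp_into_tranclp1)
    ultimately show False unfolding Z_def by auto
  qed
qed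

lemma d_connecting_noncollider_in_AN_Y:
  assumes exo: "exogenous G Env"
    and p: "is_path d G p" "hd p = Resp" "last p = Env"
    and dc: "d_connecting G p (Cov ` A)" and "A \<subseteq> AN_Y d G"
    and i: "0 < i" "Suc i < length p" "\<not> collider G p i" and t: "p ! i = Cov t"
  shows "t \<in> AN_Y d G"
proof -
  have "Cov t \<in> nodes d" using p(1) i t nth_mem[of i p] by (auto simp: is_path_def)
  then have "t \<in> {1..d}" by (auto simp: nodes_def)
  have "G\<^sup>*\<^sup>* (Cov t) Resp \<or> G\<^sup>*\<^sup>* (Cov t) Env \<or> (\<exists>t'\<in>AN_Y d G. G\<^sup>*\<^sup>* (Cov t) (Cov t'))"
    using d_connecting_noncollider_reach[OF p(1) dc i] p t \<open>A \<subseteq> AN_Y d G\<close> by auto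
  moreover have "\<not> G\<^sup>*\<^sup>* (Cov t) Env" using exogenous_rtranclp_eq[OF exo] by blast
  ultimately have "G\<^sup>+\<^sup>+ (Cov t) Resp"
    by (auto simp: AN_Y_def dest: rtranclpD intro: rtranclp_tranclp_tranclp)
  then show ?thesis using \<open>t \<in> {1..d}\<close> by (simp add: AN_Y_def)
qed

lemma separates_Int_AN_Y:
  assumes exo: "exogenous G Env" and sep: "separates_YE d G S"
  shows "separates_YE d G (S \<inter> AN_Y d G)"
  unfolding d_separated_def
proof (intro allI impI notI)
  fix p assume p: "is_path d G p \<and> hd p \<in> {Resp} \<and> last p \<in> {Env}"
    and dc: "d_connecting G p (Cov ` (S \<inter> AN_Y d G))"
  have "d_connecting G p (Cov ` S)"
    unfolding d_connecting_iff_unblocked_at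
  proof (intro allI impI)
    fix i assume i: "0 < i \<and> Suc i < length p"
    have open_i: "unblocked_at G p (Cov ` (S \<inter> AN_Y d G)) i"
      using dc i by (simp add: d_connecting_iff_unblocked_at)
    show "unblocked_at G p (Cov ` S) i"
    proof (cases "collider G p i")
      case True
      then show ?thesis using open_i by (auto simp: unblocked_at_def)
    next
      case False
      have "t \<in> AN_Y d G" if "p ! i = Cov t" for t
        using d_connecting_noncollider_in_AN_Y[OF exo _ _ _ dc _ _ _ False that] p i by auto
      then show ?thesis using open_i False by (auto simp: unblocked_at_def)
    qed
  qed
  then show False using sep p unfolding d_separated_def by blast
qed

lemma separates_mono_AN_Y:
  assumes dag: "is_dag d G" and sep: "separates_YE d G S"
    and "S \<subseteq> T" and "T \<subseteq> AN_Y d G"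
  shows "separates_YE d G T"
proof (rule ccontr)
  assume "\<not> separates_YE d G T"
  then obtain p where p: "is_path d G p" "hd p = Resp" "last p = Env"
    and dcT: "d_connecting G p (Cov ` T)"
    unfolding d_separated_def by auto
  have "\<not> d_connecting G p (Cov ` S)" using sep p unfolding d_separated_def by auto
  then obtain j where j: "0 < j" "Suc j < length p" "\<not> unblocked_at G p (Cov ` S) j"
    and dc_suffix: "d_connecting G (drop j p) (Cov ` S)"
    by (rule d_connecting_drop_after_last_blocked)
  have open_T: "unblocked_at G p (Cov ` T) j"
    using dcT j by (simp add: d_connecting_iff_unblocked_at)
  then have collider: "collider G p j"
    using j(3) \<open>S \<subseteq> T\<close> by (auto simp: unblocked_at_def split: if_splits)
  then have no_S_below: "w \<notin> Cov ` S" if "G\<^sup>*\<^sup>* (p ! j) w" for w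
    using j(3) that by (auto simp: unblocked_at_def)
  obtain t where "t \<in> T" "G\<^sup>*\<^sup>* (p ! j) (Cov t)"
    using open_T collider by (auto simp: unblocked_at_def)
  then have "G\<^sup>*\<^sup>* (p ! j) Resp"
    using \<open>T \<subseteq> AN_Y d G\<close> by (auto simp: AN_Y_def intro: rtranclp_trans tranclp_into_rtranclp)
  moreover have "is_path d G (drop j p)" "hd (drop j p) = p ! j"
    using is_path_drop[OF p(1)] j by (auto simp: hd_drop_conv_nth)
  ultimately obtain q where "is_path d G q" "hd q = Resp" "last q = Env"
    "d_connecting G q (Cov ` S)"
    using d_connecting_path_from_descendant[OF dag _ no_S_below _ _ dc_suffix] p(3) j by auto
  then show False using sep unfolding d_separated_def by auto
qed

lemma finite_Inv: "finite (Inv d indep)"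
  by (rule finite_subset[of _ "Pow {1..d}"]) (auto simp: Inv_def invariant_def)

lemma finite_MI: "finite (MI d indep)"
  by (rule finite_subset[OF _ finite_Inv]) (auto simp: MI_def)

lemma Inv_contains_MI:
  assumes "S \<in> Inv d indep"
  obtains T where "T \<in> MI d indep" "T \<subseteq> S"
proof -
  obtain T where T: "T \<in> Inv d indep" "T \<subseteq> S" "\<forall>U\<in>Inv d indep. U \<subseteq> T \<longrightarrow> T = U"
    using finite_has_minimal2[OF finite_Inv assms] by blast
  then have "T \<in> MI d indep" by (auto simp: MI_def)
  then show thesis using that T(2) by blast
qed

lemma MI_card_m_min:
  assumes "MI d indep \<noteq> {}"
  obtains S where "S \<in> MI d indep" "card S = m_min d indep"
proof -
  have "m_min d indep \<in> card ` MI d indep"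
    unfolding m_min_def using finite_MI assms by (intro Min_in) auto
  then show thesis using that by (auto simp: image_iff)
qed

lemma S_IAS_m_eq_S_IAS:
  assumes "m_max d indep \<le> m"
  shows "S_IAS_m d indep m = S_IAS d indep"
proof -
  have "card S \<le> m" if "S \<in> MI d indep" for S
  proof -
    have "card S \<le> m_max d indep"
      unfolding m_max_def using finite_MI that by (intro Max_ge) simp_all
    then show ?thesis using assms by linarith
  qed
  then have "{S \<in> MI d indep. card S \<le> m} = MI d indep" by blast
  then show ?thesis by (simp add: S_IAS_m_def S_IAS_def)
qed

lemma MI_subset_if_Int_Inv:
  assumes "\<And>S. S \<in> Inv d indep \<Longrightarrow> S \<inter> A \<in> Inv d indep" and "S \<in> MI d indep"
  shows "S \<subseteq> A"
proof -
  have "S \<inter> A \<in> Inv d indep" using assms by (simp add: MI_def)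
  then have "\<not> S \<inter> A \<subset> S" using assms(2) unfolding MI_def by blast
  then show ?thesis by blast
qed

lemma S_ICP_subset_Inv: "S \<in> Inv d indep \<Longrightarrow> S_ICP d indep \<subseteq> S"
  by (auto simp: S_ICP_def)

lemma MI_eq_S_ICP:
  assumes "S_ICP d indep \<in> Inv d indep" and "S \<in> MI d indep"
  shows "S = S_ICP d indep"
proof -
  have "S_ICP d indep \<subseteq> S" using assms(2) by (intro S_ICP_subset_Inv) (simp add: MI_def)
  moreover have "\<not> S_ICP d indep \<subset> S" using assms unfolding MI_def by blast
  ultimately show ?thesis by blast
qed

lemma S_ICP_eq_S_IAS_m_iff:
  assumes "S_IAS_m d indep m \<in> Inv d indep"
  shows "S_ICP d indep = S_IAS_m d indep m \<longleftrightarrow> S_ICP d indep \<in> Inv d indep"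
proof
  assume "S_ICP d indep \<in> Inv d indep"
  then have "S_IAS_m d indep m \<subseteq> S_ICP d indep"
    using MI_eq_S_ICP by (auto simp: S_IAS_m_def)
  then show "S_ICP d indep = S_IAS_m d indep m" using S_ICP_subset_Inv[OF assms] by blast
qed (use assms in simp)

lemma MI_subset_AN_Y:
  assumes mf: "markov_faithful d G indep" and exo: "exogenous G Env" and "S \<in> MI d indep"
  shows "S \<subseteq> AN_Y d G"
proof (rule MI_subset_if_Int_Inv[OF _ assms(3)])
  fix S assume "S \<in> Inv d indep"
  then show "S \<inter> AN_Y d G \<in> Inv d indep"
    using separates_Int_AN_Y[OF exo] by (auto simp: invariant_iff_separates[OF mf])
qed

lemma S_IAS_m_subset_AN_Y:
  assumes "markov_faithful d G indep" and "exogenous G Env"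
  shows "S_IAS_m d indep m \<subseteq> AN_Y d G"
  using MI_subset_AN_Y[OF assms] by (auto simp: S_IAS_m_def)

lemma S_IAS_m_invariant:
  assumes dag: "is_dag d G" and mf: "markov_faithful d G indep" and exo: "exogenous G Env"
    and "m_min d indep \<le> m" and "Env \<notin> parents G Resp"
  shows "S_IAS_m d indep m \<in> Inv d indep"
proof -
  have "{j \<in> {1..d}. G (Cov j) Resp} \<in> Inv d indep"
    using parents_separate[OF dag exo assms(5)] invariant_iff_separates[OF mf] by blast
  then have "MI d indep \<noteq> {}" by (metis Inv_contains_MI empty_iff)
  then obtain S where S: "S \<in> MI d indep" "card S = m_min d indep" by (rule MI_card_m_min)
  then have "S \<subseteq> S_IAS_m d indep m" using assms(4) by (auto simp: S_IAS_m_def)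
  moreover have "separates_YE d G S"
    using S(1) by (simp add: MI_def invariant_iff_separates[OF mf])
  moreover have "S_IAS_m d indep m \<subseteq> AN_Y d G" by (rule S_IAS_m_subset_AN_Y[OF mf exo])
  ultimately have "separates_YE d G (S_IAS_m d indep m)"
    using separates_mono_AN_Y[OF dag] by blast
  then show ?thesis
    using \<open>S_IAS_m d indep m \<subseteq> AN_Y d G\<close>
    by (auto simp: invariant_iff_separates[OF mf] AN_Y_def)
qed

theorem proposition5:
  fixes d m :: nat
    and G :: "node \<Rightarrow> node \<Rightarrow> bool"
    and indep :: "node set \<Rightarrow> node set \<Rightarrow> node set \<Rightarrow> bool"
  assumes dag: "is_dag d G"
    and mf: "markov_faithful d G indep"
    and exo: "exogenous G Env"
    and md: "m < d"
  shows "S_IAS_m d indep m \<subseteq> AN_Y d G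
         \<and> (m \<ge> m_max d indep \<longrightarrow> S_IAS_m d indep m = S_IAS d indep)
         \<and> (m \<ge> m_min d indep \<and> Env \<notin> parents G Resp \<longrightarrow> S_IAS_m d indep m \<in> Inv d indep)
         \<and> (m \<ge> m_min d indep \<and> Env \<notin> parents G Resp \<longrightarrow>
              S_ICP d indep \<subseteq> S_IAS_m d indep m \<and>
              (S_ICP d indep = S_IAS_m d indep m \<longleftrightarrow> S_ICP d indep \<in> Inv d indep))"
proof (intro conjI impI)
  let ?hyp = "m_min d indep \<le> m \<and> Env \<notin> parents G Resp"
  have inv: "S_IAS_m d indep m \<in> Inv d indep" if ?hyp
    using S_IAS_m_invariant[OF dag mf exo] that by blast
  show "S_IAS_m d indep m \<subseteq> AN_Y d G" by (rule S_IAS_m_subset_AN_Y[OF mf exo])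
  show "S_IAS_m d indep m = S_IAS d indep" if "m_max d indep \<le> m"
    using that by (rule S_IAS_m_eq_S_IAS)
  show "S_IAS_m d indep m \<in> Inv d indep" if ?hyp using inv[OF that] .
  show "S_ICP d indep \<subseteq> S_IAS_m d indep m" if ?hyp using S_ICP_subset_Inv[OF inv[OF that]] .
  show "S_ICP d indep = S_IAS_m d indep m \<longleftrightarrow> S_ICP d indep \<in> Inv d indep" if ?hyp
    using S_ICP_eq_S_IAS_m_iff[OF inv[OF that]] .
qed

end
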